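(* Let $n\in\mathbb N$. Let $\varphi:C(S^1)\to B(H^2(S^1))$ be the symbol map $\varphi(f)=T_f$ and let $\varphi_n$ be its restriction to $C(S^1)_{(n)}$. Then $\varphi_n$ is a unital complete order isomorphism of $C(S^1)_{(n)}$ onto $\mathcal T_{(n)}=\{T_f: f\in C(S^1)_{(n)}\}$.
   Context: $S^1$ is the unit circle, $C(S^1)$ the continuous functions on it, $\hat f(k)$ the $k$-th Fourier coefficient. $C(S^1)_{(n)}$ is the operator system of $f\in C(S^1)$ with $\hat f(k)=0$ for $|k|\ge n$, with matrix ordering: $F\in M_p(C(S^1)_{(n)})$ positive iff $F(z)\ge 0$ for all $z\in S^1$, and unit the constant $1$. $H^2(S^1)\subseteq L^2(S^1)$ is the Hardy space (closed span of $z^k$, $k\ge0$), $P$ the orthogonal projection onto it, $M_f$ multiplication by $f$ on $L^2(S^1)$, and $T_f=PM_f|_{H^2(S^1)}$ is the Toeplitz operator with symbol $f$. $\mathcal T_{(n)}$ is an operator subsystem of $B(H^2(S^1))$. A unital complete order isomorphism is a unit-preserving linear bijection which, together with its inverse, is completely positive. *)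

theory Defs
  imports "HOL-Analysis.Analysis"
begin

text \<open>Functions on the unit circle S^1 are modelled as maps complex => complex;
  to make C(S^1) a genuine set of functions on S^1, we normalise them to 0 off the circle.\<close>

definition S1 :: "complex set" where
  "S1 = sphere 0 1"

definition fourier_coeff :: "(complex \<Rightarrow> complex) \<Rightarrow> int \<Rightarrow> complex" where
  "fourier_coeff f k =
     integral {0..2*pi} (\<lambda>t. f (cis t) * cis (- (of_int k * t))) / complex_of_real (2*pi)"

definition CS1 :: "(complex \<Rightarrow> complex) set" where
  "CS1 = {f. continuous_on S1 f \<and> (\<forall>z. z \<notin> S1 \<longrightarrow> f z = 0)}"

definition CS1n :: "nat \<Rightarrow> (complex \<Rightarrow> complex) set" where
  "CS1n n = {f \<in> CS1. \<forall>k::int. \<bar>k\<bar> \<ge> int n \<longrightarrow> fourier_coeff f k = 0}"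

definition one_S1 :: "complex \<Rightarrow> complex" where
  "one_S1 z = (if z \<in> S1 then 1 else 0)"

text \<open>The Hardy space H^2(S^1), identified with l^2(N) via the orthonormal basis z^k, k \<ge> 0:
  a sequence a represents sum_k a_k z^k.\<close>
definition H2 :: "(nat \<Rightarrow> complex) set" where
  "H2 = {a. summable (\<lambda>k. (cmod (a k))\<^sup>2)}"

definition H2_inner :: "(nat \<Rightarrow> complex) \<Rightarrow> (nat \<Rightarrow> complex) \<Rightarrow> complex" where
  "H2_inner a b = (\<Sum>k. a k * cnj (b k))"

text \<open>Toeplitz operator T_f = P M_f restricted to H^2, written in the basis z^k:
  its matrix entries are <T_f z^k, z^j> = fourier_coeff f (j - k).\<close>
definition toeplitz :: "(complex \<Rightarrow> complex) \<Rightarrow> (nat \<Rightarrow> complex) \<Rightarrow> (nat \<Rightarrow> complex)" where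
  "toeplitz f a = (\<lambda>j. \<Sum>k. fourier_coeff f (int j - int k) * a k)"

definition fun_matrix_pos :: "nat \<Rightarrow> (nat \<Rightarrow> nat \<Rightarrow> complex \<Rightarrow> complex) \<Rightarrow> bool" where
  "fun_matrix_pos p F \<longleftrightarrow>
     (\<forall>z\<in>S1. \<forall>v :: nat \<Rightarrow> complex.
        let q = (\<Sum>i<p. \<Sum>j<p. cnj (v i) * F i j z * v j) in Im q = 0 \<and> Re q \<ge> 0)"

text \<open>Positivity of a p x p matrix of operators on H^2, i.e. of an operator on (H^2)^p.\<close>
definition op_matrix_pos ::
  "nat \<Rightarrow> (nat \<Rightarrow> nat \<Rightarrow> (nat \<Rightarrow> complex) \<Rightarrow> (nat \<Rightarrow> complex)) \<Rightarrow> bool" where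
  "op_matrix_pos p A \<longleftrightarrow>
     (\<forall>\<xi> :: nat \<Rightarrow> nat \<Rightarrow> complex. (\<forall>i<p. \<xi> i \<in> H2) \<longrightarrow>
        (let q = (\<Sum>i<p. \<Sum>j<p. H2_inner (A i j (\<xi> j)) (\<xi> i)) in Im q = 0 \<and> Re q \<ge> 0))"

end

(* Everything is read off the Fourier coefficients: the matrix of T_f in the basis z^k has entries
   fourier_coeff f (j - k), and a symbol in C(S^1)_(n) is its own finite Fourier series (uniqueness
   of Fourier coefficients, via Stone-Weierstrass).

   If F(z) >= 0 on the circle, then for finitely supported xi the form sum_ij <T_(F_ij) xi_j, xi_i>
   is (1/2pi) * integral of sum_ij cnj (X_i) F_ij X_j with X_i(e^it) = sum_k xi_i(k) e^ikt, hence
   >= 0.  As T_f is a combination of the 2n - 1 shifts z^d, the form is continuous under truncation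
   of xi, so positivity extends to all of (H^2)^p.

   Conversely, on the test vectors xi_i = v_i (1, cnj z, ..., cnj z^(N-1)) the form equals the sum
   over k, l < N of c(k - l), where c(d) is the d-th Fourier term of t |-> v* F(e^it) v taken at z.
   Once N >= n, each further step adds exactly v* F(z) v, so nonnegativity of the form for all N
   forces v* F(z) v >= 0. *)

theory Submission
  imports Defs
begin

section \<open>Fourier coefficients on the circle\<close>

lemma integral_cis_int_multiple:
  "integral {0..2*pi} (\<lambda>t. cis (of_int k * t)) = (if k = 0 then 2*pi else 0)"
proof (cases "k = 0")
  case True
  then show ?thesis by (simp add: scaleR_conv_of_real)
next
  case False
  define a where "a = \<i> * of_int k"
  have "a \<noteq> 0" using False by (simp add: a_def)
  then have "\<And>t. ((\<lambda>x. exp (a * of_real x) / a) has_vector_derivative exp (a * of_real t))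
      (at t within {0..2*pi})"
    by (intro derivative_eq_intros has_complex_derivative_imp_has_vector_derivative [unfolded o_def] | simp)+
  then have "((\<lambda>t. exp (a * of_real t)) has_integral
      exp (a * of_real (2*pi)) / a - exp (a * of_real 0) / a) {0..2*pi}"
    by (intro fundamental_theorem_of_calculus) auto
  moreover have "exp (a * of_real (2*pi)) = 1"
    using cis_multiple_2pi[of "of_int k"] by (simp add: a_def cis_conv_exp mult_ac)
  moreover have "\<And>t. exp (a * of_real t) = cis (of_int k * t)"
    by (simp add: a_def cis_conv_exp mult_ac)
  ultimately have "((\<lambda>t. cis (of_int k * t)) has_integral 0) {0..2*pi}" by simp
  then show ?thesis using False by (simp add: integral_unique)
qed

lemma cis_in_S1 [simp]: "cis t \<in> S1"
  by (simp add: S1_def)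

lemma S1_obtains_cis:
  assumes "z \<in> S1"
  obtains t where "t \<in> {0..2*pi}" "z = cis t"
proof -
  have "norm z = 1" using assms by (simp add: S1_def)
  then have "z = cis (Arg2pi z)" by (metis complex_norm_eq_1_exp cis_conv_exp)
  then show ?thesis using that Arg2pi_ge_0[of z] Arg2pi_lt_2pi[of z] by force
qed

lemma CS1_eqI:
  assumes "f \<in> CS1" "g \<in> CS1" "\<And>t. t \<in> {0..2*pi} \<Longrightarrow> f (cis t) = g (cis t)"
  shows "f = g"
proof
  fix z
  show "f z = g z"
  proof (cases "z \<in> S1")
    case True
    then show ?thesis using assms(3) by (elim S1_obtains_cis) auto
  qed (use assms in \<open>simp add: CS1_def\<close>)
qed

lemma continuous_on_CS1_cis:
  assumes "f \<in> CS1"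
  shows "continuous_on A (\<lambda>t. f (cis t))"
proof -
  have "continuous_on S1 f" using assms by (simp add: CS1_def)
  then show ?thesis
    by (rule continuous_on_compose2[of S1 f A cis]) (auto intro: continuous_intros)
qed

lemma CS1_lincomb: "f \<in> CS1 \<Longrightarrow> g \<in> CS1 \<Longrightarrow> (\<lambda>z. f z + c * g z) \<in> CS1"
  unfolding CS1_def by (auto intro!: continuous_intros)

lemma one_S1_in_CS1: "one_S1 \<in> CS1"
proof -
  have "continuous_on S1 one_S1"
    by (rule continuous_on_cong[THEN iffD1, OF refl _ continuous_on_const]) (simp add: one_S1_def)
  then show ?thesis by (simp add: CS1_def one_S1_def)
qed

lemma has_integral_fourier_coeff:
  assumes "f \<in> CS1"
  shows "((\<lambda>t. f (cis t) * cis (- (of_int k * t))) has_integral fourier_coeff f k * (2*pi)) {0..2*pi}"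
proof -
  have "(\<lambda>t. f (cis t) * cis (- (of_int k * t))) integrable_on {0..2*pi}"
    by (intro integrable_continuous_interval continuous_intros continuous_on_CS1_cis assms)
  then show ?thesis by (simp add: fourier_coeff_def integrable_integral)
qed

lemma fourier_coeff_lincomb:
  assumes "f \<in> CS1" "g \<in> CS1"
  shows "fourier_coeff (\<lambda>z. f z + c * g z) k = fourier_coeff f k + c * fourier_coeff g k"
proof -
  have "((\<lambda>t. (f (cis t) + c * g (cis t)) * cis (- (of_int k * t))) has_integral
      fourier_coeff f k * (2*pi) + c * (fourier_coeff g k * (2*pi))) {0..2*pi}"
    using has_integral_add[OF has_integral_fourier_coeff[OF assms(1)]
        has_integral_mult_right[OF has_integral_fourier_coeff[OF assms(2)], of c]]
    by (simp add: algebra_simps)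
  moreover have "((\<lambda>t. (f (cis t) + c * g (cis t)) * cis (- (of_int k * t))) has_integral
      fourier_coeff (\<lambda>z. f z + c * g z) k * (2*pi)) {0..2*pi}"
    using has_integral_fourier_coeff[OF CS1_lincomb[OF assms]] by simp
  ultimately have "(fourier_coeff f k + c * fourier_coeff g k) * (2*pi)
      = fourier_coeff (\<lambda>z. f z + c * g z) k * (2*pi)"
    unfolding distrib_right mult.assoc by (rule has_integral_unique)
  then show ?thesis by (simp add: pi_neq_zero)
qed

lemma fourier_coeff_one_S1: "fourier_coeff one_S1 k = (if k = 0 then 1 else 0)"
  using integral_cis_int_multiple[of "-k"] by (simp add: fourier_coeff_def one_S1_def)

lemma CS1n_lincomb: "f \<in> CS1n n \<Longrightarrow> g \<in> CS1n n \<Longrightarrow> (\<lambda>z. f z + c * g z) \<in> CS1n n"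
  by (simp add: CS1n_def CS1_lincomb fourier_coeff_lincomb)

lemma fourier_coeff_CS1n_eq_0:
  "f \<in> CS1n n \<Longrightarrow> d \<notin> {-int n<..<int n} \<Longrightarrow> fourier_coeff f d = 0"
  by (auto simp: CS1n_def)

section \<open>Uniqueness of Fourier coefficients\<close>

inductive trig_poly :: "(real \<Rightarrow> complex) \<Rightarrow> bool" where
  trig_poly_monomial: "trig_poly (\<lambda>t. c * cis (of_int k * t))"
| trig_poly_add: "trig_poly f \<Longrightarrow> trig_poly g \<Longrightarrow> trig_poly (\<lambda>t. f t + g t)"

lemma trig_poly_cong: "trig_poly f \<Longrightarrow> (\<And>t. f t = g t) \<Longrightarrow> trig_poly g"
  by (metis ext)

lemma trig_poly_const: "trig_poly (\<lambda>t. c)"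
  using trig_poly_monomial[of c 0] by simp

lemma trig_poly_mult_monomial: "trig_poly g \<Longrightarrow> trig_poly (\<lambda>t. c * cis (of_int k * t) * g t)"
proof (induction rule: trig_poly.induct)
  case (trig_poly_monomial d l)
  show ?case
    by (rule trig_poly_cong[OF trig_poly.trig_poly_monomial[of "c * d" "k + l"]])
      (simp add: cis_mult ring_distribs mult_ac)
next
  case (trig_poly_add f g)
  show ?case
    by (rule trig_poly_cong[OF trig_poly.trig_poly_add[OF trig_poly_add.IH]]) (simp add: distrib_left)
qed

lemma trig_poly_mult: "trig_poly f \<Longrightarrow> trig_poly g \<Longrightarrow> trig_poly (\<lambda>t. f t * g t)"
proof (induction rule: trig_poly.induct)
  case (trig_poly_monomial c k)
  then show ?case by (rule trig_poly_mult_monomial)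
next
  case (trig_poly_add f1 f2)
  show ?case
    by (rule trig_poly_cong[OF trig_poly.trig_poly_add[OF trig_poly_add.IH[OF trig_poly_add.prems]]])
      (simp add: distrib_right)
qed

lemma continuous_on_trig_poly: "trig_poly h \<Longrightarrow> continuous_on A h"
  by (induction rule: trig_poly.induct) (intro continuous_intros)+

text \<open>A real-linear map of the plane restricted to the circle is
  \<open>p 1 cos t + p \<i> sin t\<close>, a combination of \<open>e^{it}\<close> and \<open>e^{-it}\<close>.\<close>

lemma trig_poly_real_polynomial_function:
  "real_polynomial_function p \<Longrightarrow> trig_poly (\<lambda>t. complex_of_real (p (cis t)))"
proof (induction rule: real_polynomial_function.induct)
  case (linear p)
  interpret bounded_linear p by fact
  have p_eq: "p x = Re x * p 1 + Im x * p \<i>" for x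
  proof -
    have "x = Re x *\<^sub>R 1 + Im x *\<^sub>R \<i>" by (simp add: complex_eq_iff)
    then have "p x = p (Re x *\<^sub>R 1 + Im x *\<^sub>R \<i>)" by simp
    then show ?thesis by (simp add: add scale)
  qed
  have eq: "(of_real (p 1) - \<i> * of_real (p \<i>)) / 2 * cis (of_int 1 * t)
      + (of_real (p 1) + \<i> * of_real (p \<i>)) / 2 * cis (of_int (-1) * t)
      = complex_of_real (p (cis t))" for t
    using p_eq[of "cis t"] by (simp add: complex_eq_iff field_simps)
  show ?case by (rule trig_poly_cong[OF trig_poly_add[OF trig_poly_monomial trig_poly_monomial]]) (rule eq)
next
  case (const c)
  then show ?case by (rule trig_poly_const)
next
  case (add f g)
  show ?case by (rule trig_poly_cong[OF trig_poly.trig_poly_add[OF add.IH]]) simp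
next
  case (mult f g)
  show ?case by (rule trig_poly_cong[OF trig_poly_mult[OF mult.IH]]) simp
qed

lemma trig_poly_polynomial_function:
  fixes g :: "complex \<Rightarrow> complex"
  assumes "polynomial_function g"
  shows "trig_poly (\<lambda>t. g (cis t))"
proof -
  have "real_polynomial_function (\<lambda>x. inner (g x) 1)" "real_polynomial_function (\<lambda>x. inner (g x) \<i>)"
    using assms by (auto simp: polynomial_function_iff_Basis_inner Basis_complex_def)
  then have "trig_poly (\<lambda>t. complex_of_real (inner (g (cis t)) 1)
      + \<i> * complex_of_real (inner (g (cis t)) \<i>))"
    by (intro trig_poly_add trig_poly_mult trig_poly_const trig_poly_real_polynomial_function)
  then show ?thesis by (rule trig_poly_cong) (simp add: complex_eq_iff inner_complex_def)
qed

lemma integral_mult_cnj_trig_poly_eq_0: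
  assumes f: "f \<in> CS1" "\<And>k. fourier_coeff f k = 0" and "trig_poly h"
  shows "((\<lambda>t. f (cis t) * cnj (h t)) has_integral 0) {0..2*pi}"
  using \<open>trig_poly h\<close>
proof (induction rule: trig_poly.induct)
  case (trig_poly_monomial c k)
  show ?case
    using has_integral_mult_right[OF has_integral_fourier_coeff[OF f(1), of k], of "cnj c"]
    by (simp add: f(2) cis_cnj mult_ac)
next
  case (trig_poly_add g1 g2)
  then show ?case using has_integral_add[where k=0] by (simp add: distrib_left)
qed

lemma integral_norm_square_le_trig_approx:
  assumes f: "f \<in> CS1" "\<And>k. fourier_coeff f k = 0"
    and h: "trig_poly h"
    and bound: "\<And>t. norm (f (cis t)) \<le> M" "\<And>t. norm (f (cis t) - h t) \<le> e"
  shows "integral {0..2*pi} (\<lambda>t. (norm (f (cis t)))\<^sup>2) \<le> M * e * (2*pi)"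
proof -
  let ?g = "\<lambda>t. f (cis t) * cnj (f (cis t) - h t)"
  have int_g: "?g integrable_on {0..2*pi}"
    by (intro integrable_continuous_interval continuous_intros continuous_on_CS1_cis
        continuous_on_trig_poly f h)
  have "complex_of_real ((norm (f (cis t)))\<^sup>2) = ?g t + f (cis t) * cnj (h t)" for t
    unfolding complex_norm_square by (simp add: algebra_simps)
  then have "((\<lambda>t. complex_of_real ((norm (f (cis t)))\<^sup>2)) has_integral integral {0..2*pi} ?g)
      {0..2*pi}"
    using has_integral_add[OF integrable_integral[OF int_g] integral_mult_cnj_trig_poly_eq_0[OF f h]]
    by simp
  then have "integral {0..2*pi} (\<lambda>t. (norm (f (cis t)))\<^sup>2) = Re (integral {0..2*pi} ?g)"
    by (metis (no_types, lifting) has_integral_Re integral_unique Re_complex_of_real has_integral_cong)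
  also have "\<dots> \<le> norm (integral {0..2*pi} ?g)"
    by (rule complex_Re_le_cmod)
  also have "\<dots> \<le> M * e * (2*pi)"
  proof -
    have "0 \<le> M * e"
      using order_trans[OF norm_ge_zero bound(1)] order_trans[OF norm_ge_zero bound(2)] by simp
    moreover have "norm (?g t) \<le> M * e" for t
      using mult_mono'[OF bound norm_ge_zero norm_ge_zero]
      by (simp add: norm_mult flip: complex_cnj_diff)
    ultimately show ?thesis
      using has_integral_bound[of "M * e" ?g _ 0 "2*pi"] int_g by (simp add: integrable_integral)
  qed
  finally show ?thesis .
qed

lemma CS1_eq_0_if_fourier_coeff_eq_0:
  assumes f: "f \<in> CS1" "\<And>k. fourier_coeff f k = 0"
  shows "f = (\<lambda>z. 0)"
proof -
  have cont: "continuous_on S1 f" using f by (simp add: CS1_def)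
  have "compact S1" by (simp add: S1_def)
  then have "bounded (f ` S1)" using cont by (intro compact_imp_bounded compact_continuous_image)
  then obtain M where "M > 0" and M: "\<And>z. z \<in> S1 \<Longrightarrow> norm (f z) \<le> M"
    by (auto simp: bounded_pos)
  let ?n2 = "\<lambda>t. (norm (f (cis t)))\<^sup>2"
  have "integral {0..2*pi} ?n2 \<le> 0"
  proof (rule field_le_epsilon)
    fix e :: real assume "e > 0"
    then obtain g where "polynomial_function g" and g: "\<And>z. z \<in> S1 \<Longrightarrow> norm (f z - g z) < e / (M * (2*pi))"
      using Stone_Weierstrass_polynomial_function[OF \<open>compact S1\<close> cont, of "e / (M * (2*pi))"] \<open>M > 0\<close>
      by auto
    have "integral {0..2*pi} ?n2 \<le> M * (e / (M * (2*pi))) * (2*pi)"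
      using integral_norm_square_le_trig_approx[OF f
          trig_poly_polynomial_function[OF \<open>polynomial_function g\<close>]
          M[OF cis_in_S1] less_imp_le[OF g[OF cis_in_S1]]] .
    then show "integral {0..2*pi} ?n2 \<le> 0 + e" using \<open>M > 0\<close> by simp
  qed
  moreover have "integral {0..2*pi} ?n2 \<ge> 0"
    by (intro integral_nonneg integrable_continuous_interval continuous_intros
        continuous_on_CS1_cis f) auto
  ultimately have "\<forall>t\<in>{0..2*pi}. ?n2 t = 0"
    using integral_eq_0_iff[of 0 "2*pi" ?n2]
    by (simp add: continuous_intros continuous_on_CS1_cis f)
  then show ?thesis by (intro CS1_eqI f) (auto simp: CS1_def)
qed

definition circle_trig_sum :: "int set \<Rightarrow> (int \<Rightarrow> complex) \<Rightarrow> complex \<Rightarrow> complex" where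
  "circle_trig_sum D c z = (if z \<in> S1 then \<Sum>d\<in>D. c d * z powi d else 0)"

lemma circle_trig_sum_cis: "circle_trig_sum D c (cis t) = (\<Sum>d\<in>D. c d * cis (of_int d * t))"
  by (simp add: circle_trig_sum_def cis_power_int)

lemma circle_trig_sum_in_CS1: "circle_trig_sum D c \<in> CS1"
proof -
  have "continuous_on S1 (\<lambda>z. \<Sum>d\<in>D. c d * z powi d)"
    by (intro continuous_intros) (auto simp: S1_def)
  then have "continuous_on S1 (circle_trig_sum D c)"
    by (rule continuous_on_cong[THEN iffD1, rotated 2]) (auto simp: circle_trig_sum_def)
  then show ?thesis by (simp add: CS1_def circle_trig_sum_def)
qed

lemma fourier_coeff_circle_trig_sum:
  assumes "finite D"
  shows "fourier_coeff (circle_trig_sum D c) k = (if k \<in> D then c k else 0)"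
proof -
  have "\<And>t. circle_trig_sum D c (cis t) * cis (- (of_int k * t))
      = (\<Sum>d\<in>D. c d * cis (of_int (d - k) * t))"
    by (simp add: circle_trig_sum_cis sum_distrib_right mult.assoc cis_mult left_diff_distrib)
  then have "integral {0..2*pi} (\<lambda>t. circle_trig_sum D c (cis t) * cis (- (of_int k * t)))
      = (\<Sum>d\<in>D. integral {0..2*pi} (\<lambda>t. c d * cis (of_int (d - k) * t)))"
    using assms by (simp add: integral_sum integrable_continuous_interval continuous_intros)
  also have "\<dots> = (\<Sum>d\<in>D. c d * integral {0..2*pi} (\<lambda>t. cis (of_int (d - k) * t)))"
    by simp
  also have "\<dots> = (\<Sum>d\<in>D. if d = k then c d * (2*pi) else 0)"
    by (intro sum.cong refl) (subst integral_cis_int_multiple, simp add: scaleR_conv_of_real)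
  also have "\<dots> = (if k \<in> D then c k * (2*pi) else 0)"
    using assms by (simp add: sum.delta)
  finally show ?thesis by (simp add: fourier_coeff_def)
qed

lemma CS1n_fourier_expansion:
  assumes "f \<in> CS1n n"
  shows "f = circle_trig_sum {-int n<..<int n} (fourier_coeff f)"
proof -
  let ?h = "circle_trig_sum {-int n<..<int n} (fourier_coeff f)"
  have fh: "f \<in> CS1" "?h \<in> CS1"
    using assms circle_trig_sum_in_CS1 by (simp_all add: CS1n_def)
  have "fourier_coeff (\<lambda>z. f z - ?h z) k = 0" for k
    using fourier_coeff_CS1n_eq_0[OF assms, of k] fourier_coeff_lincomb[OF fh, of "-1" k]
    by (simp add: fourier_coeff_circle_trig_sum)
  moreover have "(\<lambda>z. f z - ?h z) \<in> CS1"
    using CS1_lincomb[OF fh, of "-1"] by simp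
  ultimately have "(\<lambda>z. f z - ?h z) = (\<lambda>z. 0)"
    by (intro CS1_eq_0_if_fourier_coeff_eq_0)
  then show ?thesis by (metis eq_iff_diff_eq_0 ext)
qed

lemma CS1n_eqI:
  "f \<in> CS1n n \<Longrightarrow> g \<in> CS1n n \<Longrightarrow> (\<And>k. fourier_coeff f k = fourier_coeff g k) \<Longrightarrow> f = g"
  by (metis CS1n_fourier_expansion ext)

section \<open>Toeplitz operators with symbols in C(S^1)_(n)\<close>

lemma suminf_eq_sum_lessThan:
  fixes a :: "nat \<Rightarrow> 'a::{t2_space,comm_monoid_add}"
  assumes "\<And>k. k \<ge> N \<Longrightarrow> a k = 0"
  shows "suminf a = (\<Sum>k<N. a k)"
  by (rule suminf_finite) (auto intro: assms simp: not_less)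

lemma H2_if_finite_support: "(\<And>k. k \<ge> N \<Longrightarrow> x k = 0) \<Longrightarrow> x \<in> H2"
  unfolding H2_def mem_Collect_eq by (rule summable_finite[of "{..<N}"]) (auto simp: not_less)

definition H2_trunc :: "nat \<Rightarrow> (nat \<Rightarrow> complex) \<Rightarrow> nat \<Rightarrow> complex" where
  "H2_trunc N x k = (if k < N then x k else 0)"

lemma H2_trunc_in_H2: "H2_trunc N x \<in> H2"
  by (rule H2_if_finite_support[of N]) (simp add: H2_trunc_def)

text \<open>The Toeplitz operator of the monomial \<open>z^d\<close>: a shift by \<open>d\<close>, dropping the first
  \<open>-d\<close> coefficients when \<open>d < 0\<close>.\<close>
definition H2_shift :: "int \<Rightarrow> (nat \<Rightarrow> complex) \<Rightarrow> nat \<Rightarrow> complex" where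
  "H2_shift d x k = (if d \<le> int k then x (nat (int k - d)) else 0)"

lemma toeplitz_finite_support:
  "(\<And>l. l \<ge> N \<Longrightarrow> x l = 0) \<Longrightarrow> toeplitz f x j = (\<Sum>l<N. fourier_coeff f (int j - int l) * x l)"
  unfolding toeplitz_def by (rule suminf_eq_sum_lessThan) simp

lemma toeplitz_CS1n_eq_sum_H2_shift:
  assumes f: "f \<in> CS1n n"
  shows "toeplitz f x k = (\<Sum>d\<in>{-int n<..<int n}. fourier_coeff f d * H2_shift d x k)"
proof -
  let ?D = "{-int n<..<int n}"
  have "toeplitz f x k = (\<Sum>l<k+n. fourier_coeff f (int k - int l) * x l)"
    unfolding toeplitz_def
    by (rule suminf_eq_sum_lessThan) (simp add: fourier_coeff_CS1n_eq_0[OF f])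
  also have "\<dots> = (\<Sum>d\<in>?D. fourier_coeff f d * H2_shift d x k)"
  proof (rule sum.reindex_bij_witness_not_neutral[where S'="{l\<in>{..<k+n}. int k - int l \<notin> ?D}"
        and T'="?D \<inter> {int k<..}" and i="\<lambda>d. nat (int k - d)" and j="\<lambda>l. int k - int l"])
    fix l assume "l \<in> {l\<in>{..<k+n}. int k - int l \<notin> ?D}"
    then show "fourier_coeff f (int k - int l) * x l = 0"
      using fourier_coeff_CS1n_eq_0[OF f] by auto
  qed (auto simp: H2_shift_def)
  finally show ?thesis .
qed

lemma toeplitz_lincomb:
  assumes "f \<in> CS1n n" "g \<in> CS1n n"
  shows "toeplitz (\<lambda>z. f z + c * g z) x = (\<lambda>j. toeplitz f x j + c * toeplitz g x j)"
proof -
  have "f \<in> CS1" "g \<in> CS1" using assms by (simp_all add: CS1n_def)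
  then show ?thesis
    unfolding toeplitz_CS1n_eq_sum_H2_shift[OF CS1n_lincomb[OF assms]]
      toeplitz_CS1n_eq_sum_H2_shift[OF assms(1)] toeplitz_CS1n_eq_sum_H2_shift[OF assms(2)]
    by (simp add: fourier_coeff_lincomb algebra_simps sum.distrib sum_distrib_left)
qed

lemma toeplitz_one_S1: "toeplitz one_S1 x = x"
proof -
  have one: "one_S1 \<in> CS1n 1"
    by (simp add: CS1n_def one_S1_in_CS1 fourier_coeff_one_S1)
  have D: "{-1<..<1::int} = {0}" by auto
  show ?thesis
    by (rule ext) (simp add: toeplitz_CS1n_eq_sum_H2_shift[OF one] D fourier_coeff_one_S1 H2_shift_def)
qed

lemma toeplitz_unit_vector:
  "toeplitz f (\<lambda>l. if l = m then 1 else 0) j = fourier_coeff f (int j - int m)"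
  by (subst toeplitz_finite_support[of "Suc m"]) (simp_all add: if_distrib cong: if_cong)

lemma toeplitz_CS1n_inj:
  assumes "f \<in> CS1n n" "g \<in> CS1n n" and eq: "\<forall>x\<in>H2. toeplitz f x = toeplitz g x"
  shows "f = g"
proof (rule CS1n_eqI[OF assms(1,2)])
  fix k :: int
  define j m where "j = nat k" and "m = nat (-k)"
  then have k: "k = int j - int m" by simp
  have "(\<lambda>l. if l = m then 1 else 0 :: complex) \<in> H2"
    by (rule H2_if_finite_support[of "Suc m"]) simp
  then show "fourier_coeff f k = fourier_coeff g k"
    using eq toeplitz_unit_vector[of f m j] toeplitz_unit_vector[of g m j] k by simp
qed

lemma H2_inner_finite_support:
  "(\<And>k. k \<ge> N \<Longrightarrow> y k = 0) \<Longrightarrow> H2_inner x y = (\<Sum>k<N. x k * cnj (y k))"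
  unfolding H2_inner_def by (rule suminf_eq_sum_lessThan) simp

lemma H2_inner_toeplitz_finite_support:
  assumes "\<And>k. k \<ge> N \<Longrightarrow> x k = 0" "\<And>k. k \<ge> N \<Longrightarrow> y k = 0"
  shows "H2_inner (toeplitz f x) y
    = (\<Sum>k<N. \<Sum>l<N. fourier_coeff f (int k - int l) * x l * cnj (y k))"
  using assms
  by (simp add: H2_inner_finite_support[of N] toeplitz_finite_support[of N] sum_distrib_right)

lemma summable_H2_inner:
  assumes "x \<in> H2" "y \<in> H2"
  shows "summable (\<lambda>k. x k * cnj (y k))"
proof (rule summable_comparison_test'[where N=0])
  show "summable (\<lambda>k. (norm (x k))\<^sup>2 + (norm (y k))\<^sup>2)"
    using assms by (intro summable_add) (simp_all add: H2_def)
  have "2 * (norm a * norm b) \<le> (norm a)\<^sup>2 + (norm b)\<^sup>2" for a b :: complex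
    using sum_squares_bound[of "norm a" "norm b"] by (simp add: power2_eq_square)
  then show "norm (x k * cnj (y k)) \<le> (norm (x k))\<^sup>2 + (norm (y k))\<^sup>2" for k
    by (simp add: norm_mult) (smt (verit) mult_nonneg_nonneg norm_ge_zero)
qed

lemma H2_shift_in_H2:
  assumes "x \<in> H2"
  shows "H2_shift d x \<in> H2"
proof -
  have x: "summable (\<lambda>k. (norm (x k))\<^sup>2)" using assms by (simp add: H2_def)
  show ?thesis
  proof (cases "d \<ge> 0")
    case True
    have "(\<lambda>k. (norm (H2_shift d x (k + nat d)))\<^sup>2) = (\<lambda>k. (norm (x k))\<^sup>2)"
      using True by (simp add: H2_shift_def)
    then have "summable (\<lambda>k. (norm (H2_shift d x (k + nat d)))\<^sup>2)" using x by simp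
    then show ?thesis unfolding H2_def mem_Collect_eq by (rule summable_iff_shift[THEN iffD1])
  next
    case False
    have "nat (int k - d) = k + nat (-d)" for k
      using False by simp
    then have "(\<lambda>k. (norm (H2_shift d x k))\<^sup>2) = (\<lambda>k. (norm (x (k + nat (-d))))\<^sup>2)"
      using False by (simp add: H2_shift_def)
    then show ?thesis
      using x summable_iff_shift[of "\<lambda>k. (norm (x k))\<^sup>2" "nat (-d)"] by (simp add: H2_def)
  qed
qed

lemma H2_inner_toeplitz_CS1n:
  assumes f: "f \<in> CS1n n" and "x \<in> H2" "y \<in> H2"
  shows "H2_inner (toeplitz f x) y
    = (\<Sum>d\<in>{-int n<..<int n}. fourier_coeff f d * H2_inner (H2_shift d x) y)"
proof -
  have "H2_inner (toeplitz f x) y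
      = (\<Sum>k. \<Sum>d\<in>{-int n<..<int n}. fourier_coeff f d * (H2_shift d x k * cnj (y k)))"
    unfolding H2_inner_def toeplitz_CS1n_eq_sum_H2_shift[OF f]
    by (simp add: sum_distrib_right mult.assoc)
  also have "\<dots> = (\<Sum>d\<in>{-int n<..<int n}. \<Sum>k. fourier_coeff f d * (H2_shift d x k * cnj (y k)))"
    using assms by (intro suminf_sum summable_mult summable_H2_inner H2_shift_in_H2)
  also have "\<dots> = (\<Sum>d\<in>{-int n<..<int n}. fourier_coeff f d * H2_inner (H2_shift d x) y)"
    unfolding H2_inner_def using assms
    by (intro sum.cong refl suminf_mult summable_H2_inner H2_shift_in_H2)
  finally show ?thesis .
qed

text \<open>Both truncations are invisible below \<open>N - nat (-d)\<close> and kill everything above it.\<close>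
lemma H2_inner_H2_shift_trunc:
  "H2_inner (H2_shift d (H2_trunc N x)) (H2_trunc N y)
    = (\<Sum>k < N - nat (-d). H2_shift d x k * cnj (y k))"
proof -
  have "H2_inner (H2_shift d (H2_trunc N x)) (H2_trunc N y)
      = (\<Sum>k < N - nat (-d). H2_shift d (H2_trunc N x) k * cnj (H2_trunc N y k))"
    unfolding H2_inner_def
    by (rule suminf_eq_sum_lessThan) (auto simp: H2_shift_def H2_trunc_def)
  also have "\<dots> = (\<Sum>k < N - nat (-d). H2_shift d x k * cnj (y k))"
    by (intro sum.cong refl) (auto simp: H2_shift_def H2_trunc_def)
  finally show ?thesis .
qed

lemma tendsto_H2_inner_toeplitz_trunc:
  assumes f: "f \<in> CS1n n" and x: "x \<in> H2" and y: "y \<in> H2"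
  shows "(\<lambda>N. H2_inner (toeplitz f (H2_trunc N x)) (H2_trunc N y)) \<longlonglongrightarrow> H2_inner (toeplitz f x) y"
proof -
  have "(\<lambda>N. H2_inner (H2_shift d (H2_trunc N x)) (H2_trunc N y)) \<longlonglongrightarrow> H2_inner (H2_shift d x) y"
    for d
    unfolding H2_inner_H2_shift_trunc
    by (unfold H2_inner_def, rule filterlim_compose[OF summable_LIMSEQ filterlim_minus_const_nat_at_top])
      (intro summable_H2_inner H2_shift_in_H2 x y)
  then show ?thesis
    unfolding H2_inner_toeplitz_CS1n[OF f H2_trunc_in_H2 H2_trunc_in_H2]
      H2_inner_toeplitz_CS1n[OF f x y]
    by (intro tendsto_sum tendsto_mult_left)
qed

section \<open>Complete positivity in both directions\<close>

definition toeplitz_form ::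
  "nat \<Rightarrow> (nat \<Rightarrow> nat \<Rightarrow> complex \<Rightarrow> complex) \<Rightarrow> (nat \<Rightarrow> nat \<Rightarrow> complex) \<Rightarrow> complex" where
  "toeplitz_form p F \<xi> = (\<Sum>i<p. \<Sum>j<p. H2_inner (toeplitz (F i j) (\<xi> j)) (\<xi> i))"

definition symbol_form ::
  "nat \<Rightarrow> (nat \<Rightarrow> nat \<Rightarrow> complex \<Rightarrow> complex) \<Rightarrow> (nat \<Rightarrow> complex) \<Rightarrow> complex \<Rightarrow> complex" where
  "symbol_form p F v z = (\<Sum>i<p. \<Sum>j<p. cnj (v i) * F i j z * v j)"

lemma op_matrix_pos_toeplitz_iff:
  "op_matrix_pos p (\<lambda>i j. toeplitz (F i j)) \<longleftrightarrow>
    (\<forall>\<xi>. (\<forall>i<p. \<xi> i \<in> H2) \<longrightarrow> toeplitz_form p F \<xi> \<in> \<real>\<^sub>\<ge>\<^sub>0)"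
  by (simp add: op_matrix_pos_def toeplitz_form_def complex_nonneg_Reals_iff Let_def conj_commute)

lemma fun_matrix_pos_iff: "fun_matrix_pos p F \<longleftrightarrow> (\<forall>z\<in>S1. \<forall>v. symbol_form p F v z \<in> \<real>\<^sub>\<ge>\<^sub>0)"
  by (simp add: fun_matrix_pos_def symbol_form_def complex_nonneg_Reals_iff Let_def conj_commute)

lemma has_integral_in_nonneg_Reals:
  fixes \<phi> :: "real \<Rightarrow> complex"
  assumes "(\<phi> has_integral I) {a..b}" "\<And>t. t \<in> {a..b} \<Longrightarrow> \<phi> t \<in> \<real>\<^sub>\<ge>\<^sub>0"
  shows "I \<in> \<real>\<^sub>\<ge>\<^sub>0"
proof -
  have "((\<lambda>t. Im (\<phi> t)) has_integral Im I) {a..b}" by (rule has_integral_Im[OF assms(1)])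
  then have "((\<lambda>t. 0) has_integral Im I) {a..b}"
    by (rule has_integral_cong[THEN iffD1, rotated]) (use assms(2) in \<open>simp add: complex_nonneg_Reals_iff\<close>)
  then have "Im I = 0" by (simp add: has_integral_0_eq)
  moreover have "0 \<le> Re I"
    by (rule has_integral_nonneg[OF has_integral_Re[OF assms(1)]])
      (use assms(2) in \<open>simp add: complex_nonneg_Reals_iff\<close>)
  ultimately show ?thesis by (simp add: complex_nonneg_Reals_iff)
qed

definition H2_poly :: "nat \<Rightarrow> (nat \<Rightarrow> complex) \<Rightarrow> real \<Rightarrow> complex" where
  "H2_poly N x t = (\<Sum>k<N. x k * cis (of_nat k * t))"

lemma has_integral_H2_inner_toeplitz:
  assumes "f \<in> CS1" "\<And>k. k \<ge> N \<Longrightarrow> x k = 0" "\<And>k. k \<ge> N \<Longrightarrow> y k = 0"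
  shows "((\<lambda>t. cnj (H2_poly N y t) * f (cis t) * H2_poly N x t)
    has_integral (2*pi) * H2_inner (toeplitz f x) y) {0..2*pi}"
proof -
  have "cnj (H2_poly N y t) * f (cis t) * H2_poly N x t
      = (\<Sum>k<N. \<Sum>l<N. f (cis t) * cis (- (of_int (int k - int l) * t)) * (x l * cnj (y k)))" for t
  proof -
    have "cnj (cis (of_nat k * t)) * cis (of_nat l * t) = cis (- (of_int (int k - int l) * t))" for k l
      by (simp add: cis_cnj cis_mult algebra_simps)
    then show ?thesis
      by (simp add: H2_poly_def sum_product sum_distrib_left mult_ac)
  qed
  moreover have "((\<lambda>t. \<Sum>k<N. \<Sum>l<N. f (cis t) * cis (- (of_int (int k - int l) * t)) * (x l * cnj (y k)))
      has_integral (\<Sum>k<N. \<Sum>l<N. fourier_coeff f (int k - int l) * (2*pi) * (x l * cnj (y k))))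
      {0..2*pi}"
    by (intro has_integral_sum finite_lessThan has_integral_mult_left has_integral_fourier_coeff assms(1))
  moreover have "(\<Sum>k<N. \<Sum>l<N. fourier_coeff f (int k - int l) * (2*pi) * (x l * cnj (y k)))
      = (2*pi) * H2_inner (toeplitz f x) y"
    by (simp add: H2_inner_toeplitz_finite_support[OF assms(2,3)] sum_distrib_left mult_ac)
  ultimately show ?thesis by simp
qed

lemma toeplitz_form_nonneg_finite_support:
  assumes "fun_matrix_pos p F" "\<And>i j. i < p \<Longrightarrow> j < p \<Longrightarrow> F i j \<in> CS1"
    and "\<And>i k. i < p \<Longrightarrow> k \<ge> N \<Longrightarrow> \<xi> i k = 0"
  shows "toeplitz_form p F \<xi> \<in> \<real>\<^sub>\<ge>\<^sub>0"
proof -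
  have "((\<lambda>t. symbol_form p F (\<lambda>i. H2_poly N (\<xi> i) t) (cis t)) has_integral
      (2*pi) * toeplitz_form p F \<xi>) {0..2*pi}"
    unfolding symbol_form_def toeplitz_form_def sum_distrib_left
    by (intro has_integral_sum finite_lessThan has_integral_H2_inner_toeplitz assms) auto
  then have "(2*pi) * toeplitz_form p F \<xi> \<in> \<real>\<^sub>\<ge>\<^sub>0"
    by (rule has_integral_in_nonneg_Reals) (use assms(1) in \<open>simp add: fun_matrix_pos_iff\<close>)
  then show ?thesis
    using pi_gt_zero by (auto simp: complex_nonneg_Reals_iff zero_le_mult_iff)
qed

lemma toeplitz_form_nonneg:
  assumes "fun_matrix_pos p F" "\<And>i j. i < p \<Longrightarrow> j < p \<Longrightarrow> F i j \<in> CS1n n"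
    and "\<And>i. i < p \<Longrightarrow> \<xi> i \<in> H2"
  shows "toeplitz_form p F \<xi> \<in> \<real>\<^sub>\<ge>\<^sub>0"
proof (rule Lim_in_closed_set[OF closed_nonneg_Reals_complex _ sequentially_bot])
  show "(\<lambda>N. toeplitz_form p F (\<lambda>i. H2_trunc N (\<xi> i))) \<longlonglongrightarrow> toeplitz_form p F \<xi>"
    unfolding toeplitz_form_def
    by (intro tendsto_sum tendsto_H2_inner_toeplitz_trunc[OF assms(2)] assms) auto
  have "F i j \<in> CS1" if "i < p" "j < p" for i j
    using assms(2)[OF that] by (simp add: CS1n_def)
  then have "toeplitz_form p F (\<lambda>i. H2_trunc N (\<xi> i)) \<in> \<real>\<^sub>\<ge>\<^sub>0" for N
    by (intro toeplitz_form_nonneg_finite_support[OF assms(1), where N=N]) (auto simp: H2_trunc_def)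
  then show "\<forall>\<^sub>F N in sequentially. toeplitz_form p F (\<lambda>i. H2_trunc N (\<xi> i)) \<in> \<real>\<^sub>\<ge>\<^sub>0"
    by simp
qed

lemma nonneg_Reals_if_linear_growth:
  fixes a b :: complex
  assumes "\<And>m. a + of_nat m * b \<in> \<real>\<^sub>\<ge>\<^sub>0"
  shows "b \<in> \<real>\<^sub>\<ge>\<^sub>0"
proof -
  have Im: "Im a + of_nat m * Im b = 0" and Re: "0 \<le> Re a + of_nat m * Re b" for m
    using assms[of m] by (simp_all add: complex_nonneg_Reals_iff)
  have "Im b = 0" using Im[of 0] Im[of 1] by simp
  moreover have "0 \<le> Re b"
  proof (rule ccontr)
    assume "\<not> 0 \<le> Re b"
    then obtain m where "Re a < of_nat m * (- Re b)"
      using ex_less_of_nat_mult[of "- Re b" "Re a"] by auto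
    then show False using Re[of m] by simp
  qed
  ultimately show ?thesis by (simp add: complex_nonneg_Reals_iff)
qed

lemma sum_lessThan_Suc_diff:
  fixes h :: "int \<Rightarrow> 'a::comm_monoid_add"
  shows "(\<Sum>k<Suc N. \<Sum>l<Suc N. h (int k - int l))
    = (\<Sum>k<N. \<Sum>l<N. h (int k - int l)) + (\<Sum>d\<in>{-int N..int N}. h d)"
proof -
  have neg: "(\<Sum>k<N. h (int k - int N)) = (\<Sum>d\<in>{-int N..<0}. h d)"
    by (rule sum.reindex_bij_witness[where i="\<lambda>d. nat (d + int N)" and j="\<lambda>k. int k - int N"]) auto
  have pos: "(\<Sum>l<N. h (int N - int l)) = (\<Sum>d\<in>{0<..int N}. h d)"
    by (rule sum.reindex_bij_witness[where i="\<lambda>d. nat (int N - d)" and j="\<lambda>l. int N - int l"]) auto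
  have split: "{-int N..int N} = insert 0 ({-int N..<0} \<union> {0<..int N})" by auto
  have union: "sum h ({-int N..<0} \<union> {0<..int N}) = sum h {-int N..<0} + sum h {0<..int N}"
    by (rule sum.union_disjoint) auto
  have "(\<Sum>d\<in>{-int N..int N}. h d) = h 0 + ((\<Sum>d\<in>{-int N..<0}. h d) + (\<Sum>d\<in>{0<..int N}. h d))"
    unfolding split by (subst sum.insert) (simp_all add: union)
  then show ?thesis
    by (simp add: sum.distrib neg pos ac_simps)
qed

definition symbol_form_fourier_term ::
  "nat \<Rightarrow> (nat \<Rightarrow> nat \<Rightarrow> complex \<Rightarrow> complex) \<Rightarrow> (nat \<Rightarrow> complex) \<Rightarrow> real \<Rightarrow> int \<Rightarrow> complex" where
  "symbol_form_fourier_term p F v s d =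
    (\<Sum>i<p. \<Sum>j<p. cnj (v i) * fourier_coeff (F i j) d * v j) * cis (of_int d * s)"

lemma sum_swap_pairs:
  "(\<Sum>i\<in>A. \<Sum>j\<in>B. \<Sum>k\<in>C. \<Sum>l\<in>D. g i j k l) = (\<Sum>k\<in>C. \<Sum>l\<in>D. \<Sum>i\<in>A. \<Sum>j\<in>B. g i j k l)"
proof -
  have "(\<Sum>i\<in>A. \<Sum>j\<in>B. \<Sum>k\<in>C. \<Sum>l\<in>D. g i j k l) = (\<Sum>i\<in>A. \<Sum>k\<in>C. \<Sum>j\<in>B. \<Sum>l\<in>D. g i j k l)"
    by (rule sum.cong[OF refl], rule sum.swap)
  also have "\<dots> = (\<Sum>k\<in>C. \<Sum>i\<in>A. \<Sum>j\<in>B. \<Sum>l\<in>D. g i j k l)"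
    by (rule sum.swap)
  also have "\<dots> = (\<Sum>k\<in>C. \<Sum>i\<in>A. \<Sum>l\<in>D. \<Sum>j\<in>B. g i j k l)"
    by (rule sum.cong[OF refl], rule sum.cong[OF refl], rule sum.swap)
  also have "\<dots> = (\<Sum>k\<in>C. \<Sum>l\<in>D. \<Sum>i\<in>A. \<Sum>j\<in>B. g i j k l)"
    by (rule sum.cong[OF refl], rule sum.swap)
  finally show ?thesis .
qed

lemma symbol_form_cis_eq_sum_fourier_term:
  assumes "\<And>i j. i < p \<Longrightarrow> j < p \<Longrightarrow> F i j \<in> CS1n n"
  shows "symbol_form p F v (cis s) = (\<Sum>d\<in>{-int n<..<int n}. symbol_form_fourier_term p F v s d)"
proof -
  let ?D = "{-int n<..<int n}"
  have "symbol_form p F v (cis s)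
      = (\<Sum>i<p. \<Sum>j<p. \<Sum>d\<in>?D. cnj (v i) * fourier_coeff (F i j) d * v j * cis (of_int d * s))"
    unfolding symbol_form_def
    by (intro sum.cong refl, subst CS1n_fourier_expansion[OF assms])
      (simp_all add: circle_trig_sum_cis sum_distrib_left sum_distrib_right mult_ac)
  also have "\<dots> = (\<Sum>i<p. \<Sum>d\<in>?D. \<Sum>j<p. cnj (v i) * fourier_coeff (F i j) d * v j * cis (of_int d * s))"
    by (rule sum.cong[OF refl], rule sum.swap)
  also have "\<dots> = (\<Sum>d\<in>?D. \<Sum>i<p. \<Sum>j<p. cnj (v i) * fourier_coeff (F i j) d * v j * cis (of_int d * s))"
    by (rule sum.swap)
  also have "\<dots> = (\<Sum>d\<in>?D. symbol_form_fourier_term p F v s d)"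
    by (simp add: symbol_form_fourier_term_def sum_distrib_right)
  finally show ?thesis .
qed

lemma toeplitz_form_test_vectors:
  "toeplitz_form p F (\<lambda>i. H2_trunc N (\<lambda>k. v i * cis (- (of_nat k * s))))
    = (\<Sum>k<N. \<Sum>l<N. symbol_form_fourier_term p F v s (int k - int l))"
proof -
  have cis_diff: "cis (s * (real k - real l)) = cis (- (s * real l)) * cnj (cis (- (s * real k)))"
    for k l :: nat
    by (simp add: cis_cnj cis_mult algebra_simps)
  have "toeplitz_form p F (\<lambda>i. H2_trunc N (\<lambda>k. v i * cis (- (of_nat k * s))))
      = (\<Sum>i<p. \<Sum>j<p. \<Sum>k<N. \<Sum>l<N.
          cnj (v i) * fourier_coeff (F i j) (int k - int l) * v j * cis (of_int (int k - int l) * s))"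
    unfolding toeplitz_form_def
    by (simp add: H2_inner_toeplitz_finite_support[of N] H2_trunc_def cis_diff mult_ac)
  also have "\<dots> = (\<Sum>k<N. \<Sum>l<N. symbol_form_fourier_term p F v s (int k - int l))"
    unfolding symbol_form_fourier_term_def sum_distrib_right by (rule sum_swap_pairs)
  finally show ?thesis .
qed

lemma symbol_form_nonneg:
  assumes pos: "\<And>\<xi>. (\<forall>i<p. \<xi> i \<in> H2) \<Longrightarrow> toeplitz_form p F \<xi> \<in> \<real>\<^sub>\<ge>\<^sub>0"
    and F: "\<And>i j. i < p \<Longrightarrow> j < p \<Longrightarrow> F i j \<in> CS1n n" and "z \<in> S1"
  shows "symbol_form p F v z \<in> \<real>\<^sub>\<ge>\<^sub>0"
proof -
  obtain s where z: "z = cis s" using S1_obtains_cis[OF \<open>z \<in> S1\<close>] by blast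
  let ?Q = "\<lambda>N. \<Sum>k<N. \<Sum>l<N. symbol_form_fourier_term p F v s (int k - int l)"
  have Q_nonneg: "?Q N \<in> \<real>\<^sub>\<ge>\<^sub>0" for N
    using pos[of "\<lambda>i. H2_trunc N (\<lambda>k. v i * cis (- (of_nat k * s)))"]
    by (simp add: H2_trunc_in_H2 toeplitz_form_test_vectors)
  have growth: "?Q (Suc N) = ?Q N + symbol_form p F v z" if "N \<ge> n" for N
  proof -
    have "(\<Sum>d\<in>{-int N..int N}. symbol_form_fourier_term p F v s d)
        = (\<Sum>d\<in>{-int n<..<int n}. symbol_form_fourier_term p F v s d)"
      using that by (intro sum.mono_neutral_right)
        (auto simp: symbol_form_fourier_term_def fourier_coeff_CS1n_eq_0[OF F])
    then show ?thesis
      unfolding sum_lessThan_Suc_diff z by (simp add: symbol_form_cis_eq_sum_fourier_term[OF F])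
  qed
  have "?Q (n + m) = ?Q n + of_nat m * symbol_form p F v z" for m
  proof (induction m)
    case (Suc m)
    have "?Q (n + Suc m) = ?Q (n + m) + symbol_form p F v z"
      by (metis add_Suc_right growth le_add1)
    then show ?case unfolding Suc.IH by (simp add: algebra_simps)
  qed simp
  then show ?thesis using Q_nonneg nonneg_Reals_if_linear_growth by metis
qed

theorem proposition4p1:
  fixes n :: nat
  shows
    \<comment> \<open>linearity of the symbol map on C(S^1)_(n)\<close>
    "(\<forall>f\<in>CS1n n. \<forall>g\<in>CS1n n. \<forall>c::complex. \<forall>a\<in>H2.
        toeplitz (\<lambda>z. f z + c * g z) a = (\<lambda>j. toeplitz f a j + c * toeplitz g a j))
     \<and> \<comment> \<open>unital: T_1 is the identity on H^2\<close>
     (\<forall>a\<in>H2. toeplitz one_S1 a = a)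
     \<and> \<comment> \<open>injective on C(S^1)_(n) (hence a bijection onto T_(n))\<close>
     (\<forall>f\<in>CS1n n. \<forall>g\<in>CS1n n. (\<forall>a\<in>H2. toeplitz f a = toeplitz g a) \<longrightarrow> f = g)
     \<and> \<comment> \<open>the map and its inverse are completely positive\<close>
     (\<forall>p::nat. \<forall>F :: nat \<Rightarrow> nat \<Rightarrow> complex \<Rightarrow> complex.
        (\<forall>i<p. \<forall>j<p. F i j \<in> CS1n n) \<longrightarrow>
        (fun_matrix_pos p F \<longleftrightarrow> op_matrix_pos p (\<lambda>i j. toeplitz (F i j))))"
proof (intro conjI ballI allI impI)
  show "toeplitz (\<lambda>z. f z + c * g z) a = (\<lambda>j. toeplitz f a j + c * toeplitz g a j)"
    if "f \<in> CS1n n" "g \<in> CS1n n" for f g c a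
    using toeplitz_lincomb[OF that] .
  show "toeplitz one_S1 a = a" for a
    by (rule toeplitz_one_S1)
  show "f = g" if "f \<in> CS1n n" "g \<in> CS1n n" "\<forall>a\<in>H2. toeplitz f a = toeplitz g a" for f g
    using toeplitz_CS1n_inj[OF that] .
  fix p and F :: "nat \<Rightarrow> nat \<Rightarrow> complex \<Rightarrow> complex"
  assume F: "\<forall>i<p. \<forall>j<p. F i j \<in> CS1n n"
  show "fun_matrix_pos p F \<longleftrightarrow> op_matrix_pos p (\<lambda>i j. toeplitz (F i j))"
  proof
    assume "fun_matrix_pos p F"
    then show "op_matrix_pos p (\<lambda>i j. toeplitz (F i j))"
      unfolding op_matrix_pos_toeplitz_iff using toeplitz_form_nonneg F by blast
  next
    assume "op_matrix_pos p (\<lambda>i j. toeplitz (F i j))"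
    then show "fun_matrix_pos p F"
      unfolding op_matrix_pos_toeplitz_iff fun_matrix_pos_iff using symbol_form_nonneg F by blast
  qed
qed

end
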